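(* Fix integers $1\le i<s\le t\le r$. For $m\ge1$ let $M(m)$ be the maximum of $k^t(\mathcal H)$ over all $s$-graphs $\mathcal H$ with $m$ edges and $\Delta_i(\mathcal H)\le\binom{r-i}{s-i}$. Then \[M(m)=(1-o(1))\,m\frac{\binom{r}{t}}{\binom{r}{s}}\quad\text{as } m\to\infty.\]
   Context: An $s$-graph is a family of $s$-subsets (edges) of a vertex set. For $|I|=i$, $d_{\mathcal H}(I)$ is the number of edges containing $I$ and $\Delta_i(\mathcal H)=\max_{|I|=i}d_{\mathcal H}(I)$. $k^t(\mathcal H)$ is the number of $t$-sets all of whose $s$-subsets are edges. *)

theory Defs
  imports "HOL-Analysis.Analysis" "HOL-Library.Landau_Symbols"
begin

definition is_sgraph :: "nat \<Rightarrow> nat set set \<Rightarrow> bool" where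
  "is_sgraph s H \<longleftrightarrow> finite H \<and> (\<forall>e\<in>H. finite e \<and> card e = s)"

definition deg :: "nat set set \<Rightarrow> nat set \<Rightarrow> nat" where
  "deg H I = card {e\<in>H. I \<subseteq> e}"

definition Delta :: "nat \<Rightarrow> nat set set \<Rightarrow> nat" where
  "Delta i H = Max {deg H I | I. finite I \<and> card I = i}"

definition kt :: "nat \<Rightarrow> nat \<Rightarrow> nat set set \<Rightarrow> nat" where
  "kt s t H = card {T. finite T \<and> card T = t \<and> (\<forall>S. S \<subseteq> T \<and> card S = s \<longrightarrow> S \<in> H)}"

definition Mmax :: "nat \<Rightarrow> nat \<Rightarrow> nat \<Rightarrow> nat \<Rightarrow> nat \<Rightarrow> nat" where
  "Mmax i s t r m = Max {kt s t H | H. is_sgraph s H \<and> card H = m \<and>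
                              Delta i H \<le> (r - i) choose (s - i)}"

end

theory Submission
  imports Defs
begin

text \<open>Upper bound: if an \<open>s\<close>-graph \<open>G\<close> has at most \<open>R choose s\<close> edges, it has at most
  \<open>card G * (R choose t) / (R choose s)\<close> \<open>t\<close>-cliques. This goes by induction on \<open>s\<close> and \<open>t\<close>:
  at a vertex \<open>v\<close> either the link of \<open>v\<close> is small enough for the induction hypothesis in \<open>s\<close>,
  or so many edges contain \<open>v\<close> that the induction hypothesis in \<open>t\<close> applies to the edges
  avoiding \<open>v\<close>; averaging over \<open>v\<close> gives the bound. The degree condition makes the link of
  every \<open>i\<close>-set small in this sense, and double counting over all \<open>i\<close>-sets yields
  \<open>kt s t H * (r choose s) \<le> card H * (r choose t)\<close>.

  Lower bound: \<open>m div (r choose s)\<close> vertex-disjoint complete \<open>s\<close>-graphs on \<open>r\<close> vertices,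
  padded with \<open>m mod (r choose s)\<close> isolated edges, satisfy the degree condition and contain
  \<open>m div (r choose s) * (r choose t)\<close> \<open>t\<close>-cliques.\<close>

definition cliques :: "'a set \<Rightarrow> nat \<Rightarrow> nat \<Rightarrow> 'a set set \<Rightarrow> 'a set set" where
  "cliques V s t G = {T. T \<subseteq> V \<and> card T = t \<and> (\<forall>S. S \<subseteq> T \<and> card S = s \<longrightarrow> S \<in> G)}"

definition link :: "'a set set \<Rightarrow> 'a set \<Rightarrow> 'a set set" where
  "link G I = (\<lambda>S. S - I) ` {S\<in>G. I \<subseteq> S}"

lemma finite_cliques: "finite V \<Longrightarrow> finite (cliques V s t G)"
  by (rule finite_subset[of _ "Pow V"]) (auto simp: cliques_def)

lemma card_link: "card (link G I) = card {S\<in>G. I \<subseteq> S}"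
  unfolding link_def by (rule card_image, rule inj_onI) (metis (no_types, lifting) Diff_partition mem_Collect_eq)

lemma link_subsets:
  assumes "G \<subseteq> {S. S \<subseteq> V \<and> card S = s}" "finite I"
  shows "link G I \<subseteq> {S. S \<subseteq> V - I \<and> card S = s - card I}"
  using assms by (auto simp: link_def card_Diff_subset)

lemma sum_card_filter_swap:
  assumes "finite A" "finite B"
  shows "(\<Sum>a\<in>A. card {b\<in>B. P a b}) = (\<Sum>b\<in>B. card {a\<in>A. P a b})"
proof -
  have "card {b\<in>B. P a b} = (\<Sum>b\<in>B. if P a b then 1 else 0)" for a
    using assms by (simp add: sum.If_cases Int_def conj_commute)
  moreover have "card {a\<in>A. P a b} = (\<Sum>a\<in>A. if P a b then 1 else 0)" for b
    using assms by (simp add: sum.If_cases Int_def conj_commute)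
  ultimately show ?thesis using sum.swap by simp
qed

lemma sum_card_containing:
  assumes "finite V" "A \<subseteq> {T. T \<subseteq> V \<and> card T = k}"
  shows "(\<Sum>v\<in>V. card {T\<in>A. v \<in> T}) = card A * k"
proof -
  have "finite A" using assms by (auto intro: finite_subset[of _ "Pow V"])
  then have "(\<Sum>v\<in>V. card {T\<in>A. v \<in> T}) = (\<Sum>T\<in>A. card {v\<in>V. v \<in> T})"
    by (rule sum_card_filter_swap[OF assms(1)])
  also have "\<dots> = (\<Sum>T\<in>A. k)"
  proof (rule sum.cong)
    fix T assume "T \<in> A"
    then have "{v\<in>V. v \<in> T} = T" "card T = k" using assms(2) by auto
    then show "card {v\<in>V. v \<in> T} = k" by simp
  qed simp
  finally show ?thesis by simp
qed

lemma sum_card_supersets: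
  assumes "finite V" "A \<subseteq> {T. T \<subseteq> V \<and> card T = k}"
  shows "(\<Sum>I | I \<subseteq> V \<and> card I = i. card {T\<in>A. I \<subseteq> T}) = card A * (k choose i)"
proof -
  let ?P = "{I. I \<subseteq> V \<and> card I = i}"
  have "finite ?P" using assms(1) by auto
  moreover have "finite A" using assms by (auto intro: finite_subset[of _ "Pow V"])
  ultimately have "(\<Sum>I\<in>?P. card {T\<in>A. I \<subseteq> T}) = (\<Sum>T\<in>A. card {I\<in>?P. I \<subseteq> T})"
    by (rule sum_card_filter_swap)
  also have "\<dots> = (\<Sum>T\<in>A. k choose i)"
  proof (rule sum.cong)
    fix T assume "T \<in> A"
    then have "T \<subseteq> V" "card T = k" using assms(2) by auto
    then have "{I\<in>?P. I \<subseteq> T} = {I. I \<subseteq> T \<and> card I = i}" by auto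
    then show "card {I\<in>?P. I \<subseteq> T} = k choose i"
      using n_subsets[of T i] \<open>T \<subseteq> V\<close> \<open>card T = k\<close> assms(1) finite_subset by metis
  qed simp
  finally show ?thesis by simp
qed

lemma card_cliques_containing_le_link:
  assumes "finite V" "finite I" "card I \<le> s"
  shows "card {T\<in>cliques V s t G. I \<subseteq> T} \<le> card (cliques V (s - card I) (t - card I) (link G I))"
proof -
  have "(\<lambda>T. T - I) ` {T\<in>cliques V s t G. I \<subseteq> T} \<subseteq> cliques V (s - card I) (t - card I) (link G I)"
  proof
    fix X assume "X \<in> (\<lambda>T. T - I) ` {T\<in>cliques V s t G. I \<subseteq> T}"
    then obtain T where T: "T \<in> cliques V s t G" "I \<subseteq> T" "X = T - I" by auto
    have "finite T" using T assms(1) finite_subset unfolding cliques_def by blast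
    have "S' \<in> link G I" if "S' \<subseteq> X" "card S' = s - card I" for S'
    proof -
      have "finite S'" "S' \<inter> I = {}" using that T \<open>finite T\<close> finite_subset[of S' T] by auto
      then have "card (S' \<union> I) = s" using assms that card_Un_disjoint[of S' I] by simp
      moreover have "S' \<union> I \<subseteq> T" using that T by auto
      ultimately have "S' \<union> I \<in> G" using T(1) unfolding cliques_def by blast
      moreover have "S' = (S' \<union> I) - I" using \<open>S' \<inter> I = {}\<close> by auto
      ultimately show ?thesis unfolding link_def by blast
    qed
    moreover have "card X = t - card I" using T \<open>finite T\<close> assms(2)
      by (simp add: cliques_def card_Diff_subset)
    ultimately show "X \<in> cliques V (s - card I) (t - card I) (link G I)"
      using T unfolding cliques_def by auto
  qed
  moreover have "inj_on (\<lambda>T. T - I) {T\<in>cliques V s t G. I \<subseteq> T}"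
    by (rule inj_onI) (metis (no_types, lifting) Diff_partition mem_Collect_eq)
  ultimately show ?thesis
    by (metis (no_types, lifting) assms(1) card_image card_mono finite_cliques)
qed

lemma card_cliques_containing_le_delete:
  assumes "finite V"
  shows "card {T\<in>cliques V s (Suc t) G. v \<in> T} \<le> card (cliques V s t {S\<in>G. v \<notin> S})"
proof -
  have "(\<lambda>T. T - {v}) ` {T\<in>cliques V s (Suc t) G. v \<in> T} \<subseteq> cliques V s t {S\<in>G. v \<notin> S}"
  proof
    fix X assume "X \<in> (\<lambda>T. T - {v}) ` {T\<in>cliques V s (Suc t) G. v \<in> T}"
    then obtain T where T: "T \<in> cliques V s (Suc t) G" "v \<in> T" "X = T - {v}" by auto
    have "finite T" using T assms finite_subset unfolding cliques_def by blast
    then show "X \<in> cliques V s t {S\<in>G. v \<notin> S}"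
      using T unfolding cliques_def by auto
  qed
  moreover have "inj_on (\<lambda>T. T - {v}) {T\<in>cliques V s (Suc t) G. v \<in> T}"
    by (rule inj_onI) (metis (no_types, lifting) insert_Diff mem_Collect_eq)
  ultimately show ?thesis
    by (metis (no_types, lifting) assms card_image card_mono finite_cliques)
qed

lemma choose_mult_le_mult_choose:
  assumes "e \<le> R" "1 \<le> t"
  shows "(e choose t) * R \<le> e * (R choose t)"
proof (cases e)
  case 0
  then show ?thesis using assms by simp
next
  case (Suc e')
  then obtain R' where R: "R = Suc R'" using assms by (cases R) auto
  obtain t' where t: "t = Suc t'" using assms by (cases t) auto
  have "(e choose t) * R * t = e * (e' choose t') * R"
    using Suc_times_binomial_eq[of e' t'] Suc t by (simp add: algebra_simps)
  also have "\<dots> \<le> e * (R' choose t') * R"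
    using binomial_right_mono[of e' R' t'] assms(1) Suc R by (intro mult_le_mono1 mult_le_mono2) simp
  also have "\<dots> = e * (R choose t) * t"
    using Suc_times_binomial_eq[of R' t'] R t by (simp add: algebra_simps)
  finally show ?thesis using t by (metis mult_le_cancel2 zero_less_Suc)
qed

lemma card_cliques_singletons_le:
  assumes "finite V" "G \<subseteq> {S. S \<subseteq> V \<and> card S = 1}" "1 \<le> t" "card G \<le> R"
  shows "card (cliques V 1 t G) * R \<le> card G * (R choose t)"
proof -
  define U where "U = \<Union>G"
  have G: "G = (\<lambda>x. {x}) ` U"
    using assms(2) unfolding U_def by (force simp: card_1_singleton_iff)
  have "U \<subseteq> V" using assms(2) unfolding U_def by auto
  have "card G = card U" unfolding G by (rule card_image) auto
  have "cliques V 1 t G = {T. T \<subseteq> U \<and> card T = t}"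
    using \<open>U \<subseteq> V\<close> unfolding cliques_def G by (auto simp: card_1_singleton_iff)
  then have "card (cliques V 1 t G) = card U choose t"
    using n_subsets[of U t] \<open>U \<subseteq> V\<close> assms(1) finite_subset by metis
  then have "card (cliques V 1 t G) * R = (card G choose t) * R" using \<open>card G = card U\<close> by simp
  also have "\<dots> \<le> card G * (R choose t)" using choose_mult_le_mult_choose assms by simp
  finally show ?thesis .
qed

lemma mult_le_mult_rescale:
  fixes x y a b c d k u v :: nat
  assumes "x * a * b \<le> y * c * d" "k * b = u * c" "k * d = v * a" "0 < a" "0 < c"
  shows "x * u \<le> y * v"
proof -
  have "(x * u) * (a * c) = x * a * b * k" using assms(2) by (simp add: ac_simps)
  also have "\<dots> \<le> y * c * d * k" using assms(1) by simp
  also have "\<dots> = (y * v) * (a * c)" using assms(3) by (simp add: ac_simps)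
  finally show ?thesis using assms(4,5) by simp
qed

lemma card_cliques_containing_vertex_le:
  fixes s t R :: nat
  assumes V: "finite V" and G: "G \<subseteq> {S. S \<subseteq> V \<and> card S = Suc s}"
    and card_G: "card G \<le> Suc R choose Suc s"
    and link_bound: "\<And>L. L \<subseteq> {S. S \<subseteq> V \<and> card S = s} \<Longrightarrow> card L \<le> R choose s \<Longrightarrow>
      card (cliques V s t L) * (R choose s) \<le> card L * (R choose t)"
    and delete_bound: "\<And>D. D \<subseteq> {S. S \<subseteq> V \<and> card S = Suc s} \<Longrightarrow> card D \<le> R choose Suc s \<Longrightarrow>
      card (cliques V (Suc s) t D) * (R choose Suc s) \<le> card D * (R choose t)"
  shows "card {T\<in>cliques V (Suc s) (Suc t) G. v \<in> T} * (R choose s) \<le> card {S\<in>G. v \<in> S} * (R choose t)"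
proof (cases "card {S\<in>G. v \<in> S} \<le> R choose s")
  case True
  have "link G {v} \<subseteq> {S. S \<subseteq> V - {v} \<and> card S = Suc s - card {v}}" by (rule link_subsets[OF G]) simp
  then have L: "link G {v} \<subseteq> {S. S \<subseteq> V \<and> card S = s}" by auto
  have card_L: "card (link G {v}) = card {S\<in>G. v \<in> S}" using card_link[of G "{v}"] by simp
  have "card {T\<in>cliques V (Suc s) (Suc t) G. v \<in> T} \<le> card (cliques V s t (link G {v}))"
    using card_cliques_containing_le_link[OF V, of "{v}" "Suc s" "Suc t" G] by simp
  then have "card {T\<in>cliques V (Suc s) (Suc t) G. v \<in> T} * (R choose s)
      \<le> card (cliques V s t (link G {v})) * (R choose s)" by (rule mult_le_mono1)
  also have "\<dots> \<le> card (link G {v}) * (R choose t)"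
    by (rule link_bound[OF L]) (simp add: card_L True)
  finally show ?thesis unfolding card_L .
next
  case False
  \<comment> \<open>by Pascal's rule fewer than \<open>R choose Suc s\<close> edges avoid \<open>v\<close>\<close>
  define D where "D = {S\<in>G. v \<notin> S}"
  have "finite G" using G by (intro finite_subset[of G "Pow V"]) (auto simp: V)
  have "G = D \<union> {S\<in>G. v \<in> S}" "D \<inter> {S\<in>G. v \<in> S} = {}" unfolding D_def by auto
  then have "card G = card D + card {S\<in>G. v \<in> S}"
    using \<open>finite G\<close> by (metis card_Un_disjoint finite_Un)
  then have D_lt: "card D < R choose Suc s" using card_G False by simp
  have D: "D \<subseteq> {S. S \<subseteq> V \<and> card S = Suc s}" using G unfolding D_def by auto
  have "card (cliques V (Suc s) t D) * (R choose Suc s) \<le> card D * (R choose t)"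
    by (rule delete_bound[OF D]) (use D_lt in simp)
  also have "\<dots> \<le> (R choose t) * (R choose Suc s)" using D_lt by simp
  finally have "card (cliques V (Suc s) t D) * (R choose Suc s) \<le> (R choose t) * (R choose Suc s)" .
  then have "card (cliques V (Suc s) t D) \<le> R choose t"
    using D_lt by (metis gr_zeroI less_nat_zero_code mult_le_cancel2)
  then have "card {T\<in>cliques V (Suc s) (Suc t) G. v \<in> T} \<le> R choose t"
    using card_cliques_containing_le_delete[OF V, of "Suc s" t G v] unfolding D_def by simp
  then have "card {T\<in>cliques V (Suc s) (Suc t) G. v \<in> T} * (R choose s) \<le> (R choose t) * (R choose s)"
    by (rule mult_le_mono1)
  also have "\<dots> \<le> (R choose t) * card {S\<in>G. v \<in> S}" using False by simp
  finally show ?thesis by (simp only: mult.commute)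
qed

lemma card_cliques_le_of_vertex_bounds:
  assumes V: "finite V" and G: "G \<subseteq> {S. S \<subseteq> V \<and> card S = Suc s}"
    and vertex_bound: "\<And>v. v \<in> V \<Longrightarrow>
      card {T\<in>cliques V (Suc s) (Suc t) G. v \<in> T} * (R choose s) \<le> card {S\<in>G. v \<in> S} * (R choose t)"
  shows "card (cliques V (Suc s) (Suc t) G) * (Suc R choose Suc s) \<le> card G * (Suc R choose Suc t)"
proof -
  let ?C = "cliques V (Suc s) (Suc t) G"
  have "(\<Sum>v\<in>V. card {T\<in>?C. v \<in> T}) * (R choose s) \<le> (\<Sum>v\<in>V. card {S\<in>G. v \<in> S}) * (R choose t)"
    unfolding sum_distrib_right by (intro sum_mono vertex_bound)
  moreover have "(\<Sum>v\<in>V. card {T\<in>?C. v \<in> T}) = card ?C * Suc t"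
    by (rule sum_card_containing[OF V]) (auto simp: cliques_def)
  moreover have "(\<Sum>v\<in>V. card {S\<in>G. v \<in> S}) = card G * Suc s"
    by (rule sum_card_containing[OF V G])
  ultimately have "card ?C * Suc t * (R choose s) \<le> card G * Suc s * (R choose t)" by simp
  then show ?thesis
    by (rule mult_le_mult_rescale[where k = "Suc R"]) (simp_all only: Suc_times_binomial_eq zero_less_Suc)
qed

lemma card_cliques_self_le:
  assumes "finite V" "G \<subseteq> {S. S \<subseteq> V \<and> card S = s}"
  shows "card (cliques V s s G) \<le> card G"
proof -
  have "cliques V s s G \<subseteq> G" unfolding cliques_def by auto
  then show ?thesis using assms by (intro card_mono finite_subset[of G "Pow V"]) auto
qed

theorem card_cliques_le:
  assumes V: "finite V" and "G \<subseteq> {S. S \<subseteq> V \<and> card S = s}" "1 \<le> s" "s \<le> t"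
    and "card G \<le> R choose s"
  shows "card (cliques V s t G) * (R choose s) \<le> card G * (R choose t)"
  using assms(3,2,4,5)
proof (induction s arbitrary: t R G rule: nat_induct_at_least)
  case base
  then have "card (cliques V 1 t G) * R \<le> card G * (R choose t)"
    by (intro card_cliques_singletons_le[OF V]) simp_all
  then show ?case by simp
next
  case (Suc s)
  note link_bound = Suc.IH
  from Suc.prems show ?case
  proof (induction t arbitrary: R G)
    case 0
    then show ?case by simp
  next
    case (Suc t)
    show ?case
    proof (cases "t = s")
      case True
      then show ?thesis using card_cliques_self_le[OF V Suc.prems(1)] by simp
    next
      case False
      show ?thesis
      proof (cases R)
        case 0
        then show ?thesis by simp
      next
        case (Suc R')
        have "card {T\<in>cliques V (Suc s) (Suc t) G. v \<in> T} * (R' choose s) \<le> card {S\<in>G. v \<in> S} * (R' choose t)"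
          for v
        proof (rule card_cliques_containing_vertex_le[OF V Suc.prems(1)])
          show "card G \<le> Suc R' choose Suc s" using Suc.prems(3) \<open>R = Suc R'\<close> by simp
          show "card (cliques V s t L) * (R' choose s) \<le> card L * (R' choose t)"
            if "L \<subseteq> {S. S \<subseteq> V \<and> card S = s}" "card L \<le> R' choose s" for L
            using link_bound[OF that(1) _ that(2)] Suc.prems(2) by simp
          show "card (cliques V (Suc s) t D) * (R' choose Suc s) \<le> card D * (R' choose t)"
            if "D \<subseteq> {S. S \<subseteq> V \<and> card S = Suc s}" "card D \<le> R' choose Suc s" for D
            using Suc.IH[OF that(1) _ that(2)] Suc.prems(2) False by simp
        qed
        then have "card (cliques V (Suc s) (Suc t) G) * (Suc R' choose Suc s)
            \<le> card G * (Suc R' choose Suc t)"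
          by (rule card_cliques_le_of_vertex_bounds[OF V Suc.prems(1)])
        then show ?thesis using \<open>R = Suc R'\<close> by simp
      qed
    qed
  qed
qed

lemma cliques_Union_eq:
  assumes H: "is_sgraph s H" and "1 \<le> s" "s \<le> t"
  shows "cliques (\<Union>H) s t H = {T. finite T \<and> card T = t \<and> (\<forall>S. S \<subseteq> T \<and> card S = s \<longrightarrow> S \<in> H)}"
proof -
  have "T \<subseteq> \<Union>H"
    if T: "card T = t" "\<forall>S. S \<subseteq> T \<and> card S = s \<longrightarrow> S \<in> H" "finite T" for T
  proof
    fix x assume "x \<in> T"
    have "s - 1 \<le> card (T - {x})" using T \<open>x \<in> T\<close> assms by simp
    then obtain S where S: "S \<subseteq> T - {x}" "card S = s - 1" "finite S"
      by (rule obtain_subset_with_card_n)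
    then have "insert x S \<subseteq> T" "card (insert x S) = s"
      using \<open>x \<in> T\<close> assms(2) by (auto simp: subset_Diff_insert)
    then have "insert x S \<in> H" using T by blast
    then show "x \<in> \<Union>H" by blast
  qed
  moreover have "finite (\<Union>H)" using H unfolding is_sgraph_def by auto
  ultimately show ?thesis unfolding cliques_def by (auto intro: finite_subset)
qed

lemma kt_eq_card_cliques:
  "is_sgraph s H \<Longrightarrow> 1 \<le> s \<Longrightarrow> s \<le> t \<Longrightarrow> kt s t H = card (cliques (\<Union>H) s t H)"
  unfolding kt_def by (simp add: cliques_Union_eq)

lemma Delta_le_iff:
  assumes "finite H"
  shows "Delta i H \<le> b \<longleftrightarrow> (\<forall>I. finite I \<and> card I = i \<longrightarrow> deg H I \<le> b)"
proof -
  have "{deg H I | I. finite I \<and> card I = i} \<subseteq> {0..card H}"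
    unfolding deg_def using assms by (auto intro: card_mono)
  then have "finite {deg H I | I. finite I \<and> card I = i}" by (rule finite_subset) simp
  moreover have "deg H {0..<i} \<in> {deg H I | I. finite I \<and> card I = i}" by auto
  ultimately show ?thesis unfolding Delta_def by (subst Max_le_iff) auto
qed

lemma card_cliques_containing_le_deg:
  assumes V: "finite V" and H: "H \<subseteq> {S. S \<subseteq> V \<and> card S = s}" and I: "finite I" "card I = i"
    and "i < s" "s \<le> t" and deg: "deg H I \<le> (r - i) choose (s - i)"
  shows "card {T\<in>cliques V s t H. I \<subseteq> T} * ((r - i) choose (s - i)) \<le> deg H I * ((r - i) choose (t - i))"
proof -
  have "card (link H I) = deg H I" unfolding deg_def by (rule card_link)
  moreover have "link H I \<subseteq> {S. S \<subseteq> V \<and> card S = s - i}"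
    using link_subsets[OF H I(1)] I(2) by auto
  ultimately have "card (cliques V (s - i) (t - i) (link H I)) * ((r - i) choose (s - i))
      \<le> deg H I * ((r - i) choose (t - i))"
    using card_cliques_le[OF V, of "link H I" "s - i" "t - i" "r - i"] assms by simp
  moreover have "card {T\<in>cliques V s t H. I \<subseteq> T} \<le> card (cliques V (s - i) (t - i) (link H I))"
    using card_cliques_containing_le_link[OF V I(1)] I(2) assms by simp
  ultimately show ?thesis by (meson le_trans mult_le_mono1)
qed

theorem kt_mult_le:
  assumes "1 \<le> i" "i < s" "s \<le> t" "t \<le> r" and H: "is_sgraph s H"
    and Delta: "Delta i H \<le> (r - i) choose (s - i)"
  shows "kt s t H * (r choose s) \<le> card H * (r choose t)"
proof -
  define V where "V = \<Union>H"
  define C where "C = cliques V s t H"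
  have "finite V" using H unfolding is_sgraph_def V_def by auto
  have H_sub: "H \<subseteq> {S. S \<subseteq> V \<and> card S = s}" using H unfolding is_sgraph_def V_def by auto
  have "finite H" using H unfolding is_sgraph_def by auto
  have "card {T\<in>C. I \<subseteq> T} * ((r - i) choose (s - i)) \<le> deg H I * ((r - i) choose (t - i))"
    if "I \<subseteq> V" "card I = i" for I
  proof -
    have "finite I" using that \<open>finite V\<close> finite_subset by blast
    then have deg: "deg H I \<le> (r - i) choose (s - i)"
      using Delta Delta_le_iff[OF \<open>finite H\<close>] that(2) by blast
    show ?thesis unfolding C_def
      by (rule card_cliques_containing_le_deg[OF \<open>finite V\<close> H_sub \<open>finite I\<close> that(2) _ _ deg])
        (use assms in simp_all)
  qed
  then have "(\<Sum>I | I \<subseteq> V \<and> card I = i. card {T\<in>C. I \<subseteq> T}) * ((r - i) choose (s - i))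
      \<le> (\<Sum>I | I \<subseteq> V \<and> card I = i. deg H I) * ((r - i) choose (t - i))"
    unfolding sum_distrib_right by (intro sum_mono) auto
  moreover have "(\<Sum>I | I \<subseteq> V \<and> card I = i. card {T\<in>C. I \<subseteq> T}) = card C * (t choose i)"
    by (rule sum_card_supersets[OF \<open>finite V\<close>]) (auto simp: C_def cliques_def)
  moreover have "(\<Sum>I | I \<subseteq> V \<and> card I = i. deg H I) = card H * (s choose i)"
    unfolding deg_def by (rule sum_card_supersets[OF \<open>finite V\<close> H_sub])
  ultimately have "card C * (t choose i) * ((r - i) choose (s - i))
      \<le> card H * (s choose i) * ((r - i) choose (t - i))" by simp
  then have "card C * (r choose s) \<le> card H * (r choose t)"
    by (rule mult_le_mult_rescale[where k = "r choose i"])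
      (use choose_mult[of i s r] choose_mult[of i t r] assms in simp_all)
  then show ?thesis using kt_eq_card_cliques[OF H] assms unfolding C_def V_def by simp
qed

lemma card_supersets_le:
  assumes "finite B" "I \<subseteq> B"
  shows "card {S\<in>{S. S \<subseteq> B \<and> card S = s}. I \<subseteq> S} \<le> (card B - card I) choose (s - card I)"
proof -
  have "finite I" using assms finite_subset by blast
  have "card {S\<in>{S. S \<subseteq> B \<and> card S = s}. I \<subseteq> S} = card (link {S. S \<subseteq> B \<and> card S = s} I)"
    by (rule card_link[symmetric])
  also have "\<dots> \<le> card {S. S \<subseteq> B - I \<and> card S = s - card I}"
    by (intro card_mono link_subsets) (simp_all add: assms(1) \<open>finite I\<close>)
  also have "\<dots> = (card B - card I) choose (s - card I)"
    using assms \<open>finite I\<close> by (simp add: n_subsets card_Diff_subset)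
  finally show ?thesis .
qed

locale disjoint_blocks =
  fixes J :: "'i set" and B :: "'i \<Rightarrow> nat set"
  assumes finite_J: "finite J" and finite_B: "\<And>j. j \<in> J \<Longrightarrow> finite (B j)"
    and disjoint_B: "disjoint_family_on B J"
begin

definition block_graph :: "nat \<Rightarrow> nat set set" where
  "block_graph s = (\<Union>j\<in>J. {S. S \<subseteq> B j \<and> card S = s})"

lemma block_graph_edge_subset:
  assumes "S \<in> block_graph s" "I \<subseteq> S" "I \<noteq> {}" "j \<in> J" "I \<subseteq> B j"
  shows "S \<subseteq> B j"
proof -
  obtain j' where "j' \<in> J" "S \<subseteq> B j'" using assms(1) unfolding block_graph_def by blast
  then have "B j \<inter> B j' \<noteq> {}" using assms(2,3,5) by blast
  then have "j' = j" using disjoint_B \<open>j \<in> J\<close> \<open>j' \<in> J\<close> unfolding disjoint_family_on_def by blast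
  then show ?thesis using \<open>S \<subseteq> B j'\<close> by simp
qed

lemma finite_block_subsets: "j \<in> J \<Longrightarrow> finite {S. S \<subseteq> B j \<and> card S = k}"
  by (rule finite_subset[of _ "Pow (B j)"]) (auto simp: finite_B)

lemma card_block_graph:
  assumes "1 \<le> s"
  shows "card (block_graph s) = (\<Sum>j\<in>J. card (B j) choose s)"
proof -
  have "card (block_graph s) = (\<Sum>j\<in>J. card {S. S \<subseteq> B j \<and> card S = s})"
    unfolding block_graph_def
  proof (rule card_UN_disjoint[OF finite_J])
    show "\<forall>j\<in>J. finite {S. S \<subseteq> B j \<and> card S = s}" using finite_block_subsets by blast
    show "\<forall>j\<in>J. \<forall>j'\<in>J. j \<noteq> j' \<longrightarrow> {S. S \<subseteq> B j \<and> card S = s} \<inter> {S. S \<subseteq> B j' \<and> card S = s} = {}"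
    proof (intro ballI impI)
      fix j j' assume "j \<in> J" "j' \<in> J" "j \<noteq> j'"
      then have "B j \<inter> B j' = {}" using disjoint_B unfolding disjoint_family_on_def by blast
      then have "card S \<noteq> s" if "S \<subseteq> B j" "S \<subseteq> B j'" for S
        using that assms by (metis Int_greatest card.empty not_one_le_zero subset_empty)
      then show "{S. S \<subseteq> B j \<and> card S = s} \<inter> {S. S \<subseteq> B j' \<and> card S = s} = {}" by blast
    qed
  qed
  also have "\<dots> = (\<Sum>j\<in>J. card (B j) choose s)"
    by (rule sum.cong) (simp_all add: n_subsets finite_B)
  finally show ?thesis .
qed

lemma is_sgraph_block_graph: "is_sgraph s (block_graph s)"
  unfolding is_sgraph_def
proof
  show "finite (block_graph s)"
    unfolding block_graph_def using finite_J finite_block_subsets by blast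
  show "\<forall>e\<in>block_graph s. finite e \<and> card e = s"
    unfolding block_graph_def using finite_B rev_finite_subset by blast
qed

lemma deg_block_graph_le:
  assumes "\<And>j. j \<in> J \<Longrightarrow> card (B j) \<le> r" and I: "finite I" "I \<noteq> {}" "card I \<le> s"
  shows "deg (block_graph s) I \<le> (r - card I) choose (s - card I)"
proof (cases "\<exists>j\<in>J. I \<subseteq> B j")
  case True
  then obtain j where j: "j \<in> J" "I \<subseteq> B j" by blast
  then have "{S\<in>block_graph s. I \<subseteq> S} \<subseteq> {S\<in>{S. S \<subseteq> B j \<and> card S = s}. I \<subseteq> S}"
    using block_graph_edge_subset I(2) unfolding block_graph_def by blast
  then have "deg (block_graph s) I \<le> card {S\<in>{S. S \<subseteq> B j \<and> card S = s}. I \<subseteq> S}"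
    unfolding deg_def using finite_B[OF j(1)] by (intro card_mono) auto
  also have "\<dots> \<le> (card (B j) - card I) choose (s - card I)"
    by (rule card_supersets_le[OF finite_B[OF j(1)] j(2)])
  also have "\<dots> \<le> (r - card I) choose (s - card I)"
    using assms(1)[OF j(1)] by (intro binomial_right_mono) simp
  finally show ?thesis .
next
  case False
  then have "{S\<in>block_graph s. I \<subseteq> S} = {}" unfolding block_graph_def by blast
  then show ?thesis unfolding deg_def by (metis card.empty zero_le)
qed

lemma Delta_block_graph_le:
  assumes "\<And>j. j \<in> J \<Longrightarrow> card (B j) \<le> r" "1 \<le> i" "i \<le> s"
  shows "Delta i (block_graph s) \<le> (r - i) choose (s - i)"
proof -
  have "deg (block_graph s) I \<le> (r - i) choose (s - i)" if "finite I" "card I = i" for I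
  proof -
    have "I \<noteq> {}" using that assms(2) by auto
    then show ?thesis using deg_block_graph_le[OF assms(1) \<open>finite I\<close>] that(2) assms(3) by simp
  qed
  then show ?thesis using is_sgraph_block_graph unfolding is_sgraph_def by (simp add: Delta_le_iff)
qed

lemma kt_block_graph_ge:
  assumes "1 \<le> s" "s \<le> t"
  shows "(\<Sum>j\<in>J. card (B j) choose t) \<le> kt s t (block_graph s)"
proof -
  let ?K = "{T. finite T \<and> card T = t \<and> (\<forall>S. S \<subseteq> T \<and> card S = s \<longrightarrow> S \<in> block_graph s)}"
  have "block_graph t \<subseteq> ?K"
  proof
    fix T assume "T \<in> block_graph t"
    then obtain j where "j \<in> J" "T \<subseteq> B j" "card T = t" unfolding block_graph_def by blast
    then have "S \<in> block_graph s" if "S \<subseteq> T" "card S = s" for S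
      using that unfolding block_graph_def by blast
    then show "T \<in> ?K" using \<open>T \<subseteq> B j\<close> \<open>card T = t\<close> finite_B[OF \<open>j \<in> J\<close>] rev_finite_subset by blast
  qed
  moreover have "finite ?K"
  proof -
    have "finite (\<Union>(block_graph s))"
      using is_sgraph_block_graph unfolding is_sgraph_def by (intro finite_Union) auto
    then show ?thesis
      using cliques_Union_eq[OF is_sgraph_block_graph assms] finite_cliques by metis
  qed
  ultimately have "card (block_graph t) \<le> kt s t (block_graph s)"
    unfolding kt_def by (rule card_mono[rotated])
  then show ?thesis using card_block_graph assms by simp
qed

end

lemma disjoint_family_on_consecutive_intervals:
  fixes len :: "nat \<Rightarrow> nat"
  assumes "\<And>j. len j \<le> r"
  shows "disjoint_family_on (\<lambda>j. {j * r..<j * r + len j}) J"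
proof -
  have "{a * r..<a * r + len a} \<inter> {b * r..<b * r + len b} = {}" if "a < b" for a b
  proof -
    have "Suc a * r \<le> b * r" using that by (intro mult_le_mono1) simp
    then have "a * r + len a \<le> b * r" using assms[of a] by simp
    then show ?thesis by auto
  qed
  then show ?thesis unfolding disjoint_family_on_def by (metis Int_commute nat_neq_iff)
qed

lemma exists_sgraph_kt_ge:
  assumes "1 \<le> i" "i < s" "s \<le> t" "t \<le> r"
  shows "\<exists>H. is_sgraph s H \<and> card H = m \<and> Delta i H \<le> (r - i) choose (s - i)
           \<and> m div (r choose s) * (r choose t) \<le> kt s t H"
proof -
  define q where "q = m div (r choose s)"
  define len where "len j = (if j < q then r else s)" for j
  define B where "B j = {j * r ..< j * r + len j}" for j
  define J where "J = {0..<q + m mod (r choose s)}"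
  have len_le: "len j \<le> r" for j using assms unfolding len_def by auto
  have "disjoint_family_on B J"
    unfolding B_def by (rule disjoint_family_on_consecutive_intervals[OF len_le])
  then interpret disjoint_blocks J B
    by unfold_locales (simp_all add: J_def B_def)
  have card_B: "card (B j) = len j" for j unfolding B_def by simp
  have "card (block_graph s) = (\<Sum>j\<in>J. len j choose s)"
    using card_block_graph assms card_B by simp
  also have "\<dots> = (\<Sum>j\<in>{0..<q}. len j choose s) + (\<Sum>j\<in>{q..<q + m mod (r choose s)}. len j choose s)"
    unfolding J_def by (rule sum.atLeastLessThan_concat[symmetric]) simp_all
  also have "\<dots> = (\<Sum>j\<in>{0..<q}. r choose s) + (\<Sum>j\<in>{q..<q + m mod (r choose s)}. 1)"
    by (intro arg_cong2[where f="(+)"] sum.cong) (simp_all add: len_def)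
  also have "\<dots> = m" by (simp add: q_def div_mult_mod_eq)
  finally have "card (block_graph s) = m" .
  moreover have "Delta i (block_graph s) \<le> (r - i) choose (s - i)"
    using Delta_block_graph_le[of r i s] len_le card_B assms by simp
  moreover have "q * (r choose t) \<le> kt s t (block_graph s)"
  proof -
    have "q * (r choose t) = (\<Sum>j\<in>{0..<q}. len j choose t)" by (simp add: len_def)
    also have "\<dots> \<le> (\<Sum>j\<in>J. len j choose t)" unfolding J_def by (rule sum_mono2) auto
    also have "\<dots> \<le> kt s t (block_graph s)" using kt_block_graph_ge assms card_B by simp
    finally show ?thesis .
  qed
  ultimately show ?thesis using is_sgraph_block_graph unfolding q_def by blast
qed

lemma Mmax_bounds:
  assumes "1 \<le> i" "i < s" "s \<le> t" "t \<le> r"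
  shows "m div (r choose s) * (r choose t) \<le> Mmax i s t r m"
    and "Mmax i s t r m * (r choose s) \<le> m * (r choose t)"
proof -
  let ?K = "{kt s t H | H. is_sgraph s H \<and> card H = m \<and> Delta i H \<le> (r - i) choose (s - i)}"
  have upper: "k * (r choose s) \<le> m * (r choose t)" if "k \<in> ?K" for k
    using that kt_mult_le[OF assms] by auto
  have "k \<le> m * (r choose t)" if "k \<in> ?K" for k
  proof -
    have "1 \<le> r choose s" using assms by (simp add: Suc_le_eq)
    then have "k * 1 \<le> k * (r choose s)" by (rule mult_le_mono2)
    then have "k \<le> k * (r choose s)" by simp
    also have "\<dots> \<le> m * (r choose t)" by (rule upper[OF that])
    finally show ?thesis .
  qed
  then have "?K \<subseteq> {0..m * (r choose t)}" by (meson atLeastAtMost_iff subsetI zero_le)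
  then have "finite ?K" by (rule finite_subset) simp
  obtain H where H: "is_sgraph s H" "card H = m" "Delta i H \<le> (r - i) choose (s - i)"
    "m div (r choose s) * (r choose t) \<le> kt s t H"
    using exists_sgraph_kt_ge[OF assms] by blast
  then have "kt s t H \<in> ?K" by blast
  then show "m div (r choose s) * (r choose t) \<le> Mmax i s t r m"
    unfolding Mmax_def using Max_ge[OF \<open>finite ?K\<close>] H(4) order_trans by blast
  have "Max ?K \<in> ?K" using \<open>finite ?K\<close> \<open>kt s t H \<in> ?K\<close> by (intro Max_in) auto
  then show "Mmax i s t r m * (r choose s) \<le> m * (r choose t)" unfolding Mmax_def by (rule upper)
qed

lemma asymp_equiv_of_div_bounds:
  fixes f :: "nat \<Rightarrow> real" and c :: nat and a :: real
  assumes "0 < c" "0 < a"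
    and lower: "\<And>m. real (m div c) * a \<le> f m" and upper: "\<And>m. f m * real c \<le> real m * a"
  shows "f \<sim>[at_top] (\<lambda>m. real m * (a / real c))"
proof (rule asymp_equiv_sandwich_real)
  let ?l = "\<lambda>m. (real m - real c) * (a / real c)" and ?u = "\<lambda>m. real m * (a / real c)"
  show "?l \<sim>[at_top] ?u"
  proof (rule asymp_equivI')
    have "\<forall>\<^sub>F m in at_top. 1 - real c / real m = ?l m / ?u m"
      using eventually_gt_at_top[of 0] by eventually_elim (use assms in \<open>simp add: field_simps\<close>)
    moreover have "(\<lambda>m. 1 - real c / real m) \<longlonglongrightarrow> 1"
      using tendsto_diff[OF tendsto_const lim_const_over_n[of "real c"]] by simp
    ultimately show "((\<lambda>m. ?l m / ?u m) \<longlongrightarrow> 1) at_top" by (rule Lim_transform_eventually[rotated])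
  qed
  show "?u \<sim>[at_top] ?u" by simp
  have "f m \<in> {?l m..?u m}" for m
  proof -
    have "m < m div c * c + c"
      using mod_less_divisor[OF \<open>0 < c\<close>, of m] div_mult_mod_eq[of m c] by linarith
    then have "real m - real c \<le> real (m div c) * real c" by (simp flip: of_nat_mult)
    then have "?l m \<le> real (m div c) * real c * (a / real c)"
      using assms by (intro mult_right_mono) simp_all
    also have "\<dots> \<le> f m" using lower[of m] \<open>0 < c\<close> by simp
    finally have "?l m \<le> f m" .
    moreover have "f m \<le> ?u m" using upper[of m] \<open>0 < c\<close> by (simp add: field_simps)
    ultimately show ?thesis by simp
  qed
  then show "\<forall>\<^sub>F m in at_top. f m \<in> {?l m..?u m}" by simp
qed

theorem mainTheorem18:
  fixes i s t r :: nat
  assumes "1 \<le> i" "i < s" "s \<le> t" "t \<le> r"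
  shows "(\<lambda>m. real (Mmax i s t r m)) \<sim>[at_top]
         (\<lambda>m. real m * (real (r choose t) / real (r choose s)))"
proof (rule asymp_equiv_of_div_bounds)
  show "0 < r choose s" "0 < real (r choose t)" using assms by simp_all
  show "real (m div (r choose s)) * real (r choose t) \<le> real (Mmax i s t r m)" for m
    using Mmax_bounds(1)[OF assms, of m] by (simp flip: of_nat_mult)
  show "real (Mmax i s t r m) * real (r choose s) \<le> real m * real (r choose t)" for m
    using Mmax_bounds(2)[OF assms, of m] by (simp flip: of_nat_mult)
qed

end
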